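(* Let $?:[0,1]\to[0,1]$ be the Minkowski question mark function and let $k\in\mathbb{N}_0=\{0,1,2,\dots\}$. Suppose that $\int_0^1\cos(2\pi n x)\,d?(x)\to 0$ as $n\to\infty$ ($n\in\mathbb{N}$). Then $$\int_0^1 (ix)^k e^{itx}\,d?(x)=o(1)\quad\text{as } |t|\to\infty.$$
   Context: The Minkowski question mark function is defined on $[0,1]$ by $?(0)=0$, $?(1)=1$ and, for $x=[0;a_1,a_2,a_3,\dots]$ written as a regular continued fraction (finite for rational $x$, in which case the sum is finite), $?(x)=2\sum_{i\ge1}(-1)^{i+1}2^{-(a_1+\cdots+a_i)}$. It is continuous, strictly increasing and singular. The hypothesis is an affirmative answer to Salem's question whether the Fourier–Stieltjes coefficients $d_n=\int_0^1\cos(2\pi nx)\,d?(x)$ tend to zero (note $\int_0^1\sin(2\pi nx)\,d?(x)=0$ for all $n$). *)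

theory Defs
  imports "HOL-Analysis.Analysis"
begin

text \<open>Continued fraction remainders via the Gauss map:
  cf_rem 0 x = x, cf_rem (n+1) x = frac (1 / cf_rem n x) (with frac (1/0) = 0,
  so the sequence becomes 0 once the expansion terminates).
  For x in (0,1], the i-th partial quotient a_(i+1) is floor (1 / cf_rem i x),
  provided cf_rem i x is nonzero.\<close>

fun cf_rem :: "nat \<Rightarrow> real \<Rightarrow> real" where
  "cf_rem 0 x = x"
| "cf_rem (Suc n) x = frac (1 / cf_rem n x)"

definition cf_digit :: "nat \<Rightarrow> real \<Rightarrow> int" where
  "cf_digit i x = \<lfloor>1 / cf_rem i x\<rfloor>"

text \<open>Minkowski question mark function:
  ?(x) = 2 * sum_{i>=1} (-1)^(i+1) 2^(-(a_1+...+a_i)), with ?(0)=0, ?(1)=1;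
  extended by 0 to the left of 0 and by 1 to the right of 1 (so that it is a
  distribution function whose Stieltjes measure lives on [0,1]).\<close>

definition minkowski_q :: "real \<Rightarrow> real" where
  "minkowski_q x =
     (if x \<le> 0 then 0 else if 1 \<le> x then 1 else
      (\<Sum>i. if cf_rem i x \<noteq> 0
             then 2 * (-1) ^ i * 2 powr (- real_of_int (\<Sum>j\<le>i. cf_digit j x))
             else 0))"

definition minkowski_measure :: "real measure" where
  "minkowski_measure = interval_measure minkowski_q"

end

theory Submission
  imports Defs "HOL-Probability.Probability"
begin

text \<open>The question mark function satisfies \<open>?(1 - x) = 1 - ?(x)\<close>, so \<open>d?\<close> is invariant under
  \<open>x \<mapsto> 1 - x\<close>: its sine coefficients vanish, and the hypothesis says that all coefficients
  \<open>\<integral> exp(2\<pi>imx) d?\<close> tend to \<open>0\<close> as \<open>|m| \<rightarrow> \<infinity>\<close>. Since \<open>d?\<close> has no atoms, a continuous \<open>g\<close> on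
  \<open>[0, 1]\<close> is approximated by trigonometric polynomials uniformly away from the endpoints and
  with small \<open>L\<^sup>1(d?)\<close> error near them, hence \<open>\<integral> g(x) exp(2\<pi>inx) d? \<rightarrow> 0\<close>. For
  \<open>g(x) = (ix)\<^sup>k exp(2\<pi>iux)\<close> this holds uniformly in \<open>u \<in> [0, 1]\<close> by equicontinuity, and
  writing \<open>t = 2\<pi>(n + u)\<close> gives the claim.\<close>

section \<open>The reflection symmetry of the question mark function\<close>

definition minkowski_term :: "real \<Rightarrow> nat \<Rightarrow> real" where
  "minkowski_term x i =
     (if cf_rem i x \<noteq> 0 then 2 * (-1) ^ i * 2 powr (- real_of_int (\<Sum>j\<le>i. cf_digit j x)) else 0)"

lemma minkowski_q_eq_suminf: "0 < x \<Longrightarrow> x < 1 \<Longrightarrow> minkowski_q x = (\<Sum>i. minkowski_term x i)"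
  by (simp add: minkowski_q_def minkowski_term_def)

lemma cf_rem_bounds: "0 \<le> x \<Longrightarrow> x < 1 \<Longrightarrow> 0 \<le> cf_rem i x \<and> cf_rem i x < 1"
  by (cases i) (auto simp: frac_lt_1)

lemma cf_rem_eq_0_mono: "cf_rem i x = 0 \<Longrightarrow> i \<le> j \<Longrightarrow> cf_rem j x = 0"
  by (induction j) (auto simp: le_Suc_eq)

declare cf_rem.simps(2) [simp del]

lemma cf_digit_ge_1: "0 \<le> x \<Longrightarrow> x < 1 \<Longrightarrow> cf_rem i x \<noteq> 0 \<Longrightarrow> 1 \<le> cf_digit i x"
  using cf_rem_bounds[of x i] by (simp add: cf_digit_def le_floor_iff)

lemma abs_minkowski_term_le:
  assumes "0 \<le> x" "x < 1"
  shows "\<bar>minkowski_term x i\<bar> \<le> (1/2) ^ i"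
proof (cases "cf_rem i x = 0")
  case False
  have "\<forall>j\<le>i. 1 \<le> cf_digit j x"
    using assms False cf_digit_ge_1 cf_rem_eq_0_mono by blast
  then have "int i + 1 \<le> (\<Sum>j\<le>i. cf_digit j x)"
    using sum_mono[of "{..i}" "\<lambda>_. 1::int" "\<lambda>j. cf_digit j x"] by simp
  then have digits: "real i + 1 \<le> real_of_int (\<Sum>j\<le>i. cf_digit j x)"
    by linarith
  have "\<bar>minkowski_term x i\<bar> = 2 * 2 powr (- real_of_int (\<Sum>j\<le>i. cf_digit j x))"
    using False by (simp add: abs_mult minkowski_term_def)
  also have "\<dots> \<le> 2 * 2 powr (- (real i + 1))"
    using digits by simp
  also have "\<dots> = 2 / 2 powr (real i + 1)"
    by (simp only: powr_minus divide_inverse)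
  also have "\<dots> = (1/2) ^ i"
    using powr_realpow[of 2 "Suc i"] by (simp add: power_one_over add.commute)
  finally show ?thesis .
qed (simp add: minkowski_term_def)

lemma summable_minkowski_term: "0 \<le> x \<Longrightarrow> x < 1 \<Longrightarrow> summable (minkowski_term x)"
  by (rule summable_comparison_test[OF _ summable_geometric[of "1/2::real"]])
     (use abs_minkowski_term_le in auto)

text \<open>For \<open>0 < x < 1/2\<close> the expansion of \<open>1 - x\<close> is \<open>[0; 1, a\<^sub>1 - 1, a\<^sub>2, a\<^sub>3, \<dots>]\<close>
  when \<open>x = [0; a\<^sub>1, a\<^sub>2, \<dots>]\<close>.\<close>

lemma cf_rem_one_minus:
  assumes "0 < x" "x < 1/2"
  shows "cf_rem (Suc 0) (1 - x) = x / (1 - x)"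
    and "cf_rem (Suc (Suc i)) (1 - x) = cf_rem (Suc i) x"
proof -
  have floor: "\<lfloor>1 / (1 - x)\<rfloor> = 1"
    using assms by (intro floor_unique) (auto simp: field_simps)
  show first: "cf_rem (Suc 0) (1 - x) = x / (1 - x)"
    using assms floor by (simp add: cf_rem.simps frac_def field_simps)
  have "1 / (x / (1 - x)) = 1 / x - 1"
    using assms by (simp add: field_simps)
  then have "cf_rem (Suc (Suc 0)) (1 - x) = frac (1 / x - 1)"
    by (simp only: cf_rem.simps(2)[of "Suc 0"] first)
  then have "cf_rem (Suc (Suc 0)) (1 - x) = cf_rem (Suc 0) x"
    by (simp add: cf_rem.simps frac_def)
  then show "cf_rem (Suc (Suc i)) (1 - x) = cf_rem (Suc i) x"
    by (induction i) (simp_all add: cf_rem.simps)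
qed

lemma minkowski_term_one_minus:
  assumes "0 < x" "x < 1/2"
  shows "minkowski_term (1 - x) 0 = 1"
    and "minkowski_term (1 - x) (Suc i) = - minkowski_term x i"
proof -
  have digit0: "cf_digit 0 (1 - x) = 1"
    using assms by (simp add: cf_digit_def floor_unique field_simps)
  have "1 / (x / (1 - x)) = 1 / x - 1"
    using assms by (simp add: field_simps)
  then have digit1: "cf_digit (Suc 0) (1 - x) = cf_digit 0 x - 1"
    using assms by (simp add: cf_digit_def cf_rem_one_minus(1))
  have digits: "cf_digit (Suc (Suc j)) (1 - x) = cf_digit (Suc j) x" for j
    using assms by (simp add: cf_digit_def cf_rem_one_minus(2))
  have sums: "(\<Sum>j\<le>Suc i. cf_digit j (1 - x)) = (\<Sum>j\<le>i. cf_digit j x)"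
    by (induction i) (simp_all add: digit0 digit1 digits)
  have nonzero: "(cf_rem (Suc i) (1 - x) \<noteq> 0) = (cf_rem i x \<noteq> 0)"
    using assms by (cases i) (simp_all add: cf_rem_one_minus)
  show "minkowski_term (1 - x) 0 = 1"
    using assms digit0 by (simp add: minkowski_term_def powr_minus)
  show "minkowski_term (1 - x) (Suc i) = - minkowski_term x i"
    using nonzero sums by (simp add: minkowski_term_def)
qed

lemma minkowski_q_one_minus_lt_half:
  assumes "0 < x" "x < 1/2"
  shows "minkowski_q (1 - x) = 1 - minkowski_q x"
proof -
  have "minkowski_q (1 - x) = minkowski_term (1 - x) 0 + (\<Sum>i. minkowski_term (1 - x) (Suc i))"
    using assms summable_minkowski_term[of "1 - x"]
    by (simp add: minkowski_q_eq_suminf suminf_split_head)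
  also have "\<dots> = 1 - (\<Sum>i. minkowski_term x i)"
    using assms summable_minkowski_term[of x] by (simp add: minkowski_term_one_minus suminf_minus)
  finally show ?thesis
    using assms by (simp add: minkowski_q_eq_suminf)
qed

lemma minkowski_q_half: "minkowski_q (1/2) = 1/2"
proof -
  have "cf_rem (Suc i) (1/2) = 0" for i
    by (induction i) (simp add: cf_rem.simps, subst cf_rem.simps(2), simp)
  then have "minkowski_term (1/2) = (\<lambda>i. if i = 0 then 1/2 else 0)"
    by (auto simp: fun_eq_iff minkowski_term_def cf_digit_def powr_minus gr0_conv_Suc)
  then show ?thesis
    using sums_single[of 0 "\<lambda>_. 1/2::real"] by (simp add: minkowski_q_eq_suminf sums_iff)
qed

lemma minkowski_q_one_minus: "minkowski_q (1 - x) = 1 - minkowski_q x"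
proof -
  consider "x \<le> 0 \<or> 1 \<le> x" | "0 < x" "x < 1/2" | "x = 1/2" | "1/2 < x" "x < 1"
    by linarith
  then show ?thesis
  proof cases
    case 1
    then show ?thesis by (auto simp: minkowski_q_def)
  next
    case 2
    then show ?thesis by (rule minkowski_q_one_minus_lt_half)
  next
    case 3
    then show ?thesis by (simp only:) (simp add: minkowski_q_half)
  next
    case 4
    then show ?thesis
      using minkowski_q_one_minus_lt_half[of "1 - x"] by simp
  qed
qed

section \<open>Trigonometric polynomials\<close>

definition fourier_char :: "int \<Rightarrow> real \<Rightarrow> complex" where
  "fourier_char m x = cis (2 * pi * of_int m * x)"

lemma fourier_char_mult: "fourier_char m x * fourier_char n x = fourier_char (m + n) x"
  by (simp add: fourier_char_def cis_mult algebra_simps)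

lemma norm_fourier_char [simp]: "norm (fourier_char m x) = 1"
  by (simp add: fourier_char_def)

lemma continuous_on_fourier_char [continuous_intros]: "continuous_on A (fourier_char m)"
  unfolding fourier_char_def by (intro continuous_intros)

inductive trig_poly :: "(real \<Rightarrow> complex) \<Rightarrow> bool" where
  monomial: "trig_poly (\<lambda>x. c * fourier_char m x)"
| add: "trig_poly f \<Longrightarrow> trig_poly g \<Longrightarrow> trig_poly (\<lambda>x. f x + g x)"

lemma trig_poly_const: "trig_poly (\<lambda>x. c)"
  using trig_poly.monomial[of c 0] by (simp add: fourier_char_def)

lemma continuous_on_trig_poly: "trig_poly f \<Longrightarrow> continuous_on A f"
  by (induction rule: trig_poly.induct) (auto intro!: continuous_intros)

lemma trig_poly_mult:
  assumes "trig_poly f" "trig_poly g"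
  shows "trig_poly (\<lambda>x. f x * g x)"
  using assms
proof (induction rule: trig_poly.induct)
  case (monomial c m)
  from monomial.prems show ?case
  proof (induction rule: trig_poly.induct)
    case (monomial d n)
    then show ?case
      using trig_poly.monomial[of "c * d" "m + n"]
      by (simp add: fourier_char_mult[symmetric] algebra_simps)
  qed (simp add: distrib_left trig_poly.add)
qed (simp add: distrib_right trig_poly.add)

lemma trig_poly_Re_Im_circle:
  "trig_poly (\<lambda>x. of_real (Re (fourier_char 1 x)))"
  "trig_poly (\<lambda>x. of_real (Im (fourier_char 1 x)))"
proof -
  have "of_real (Re (fourier_char 1 x)) = 1/2 * fourier_char 1 x + 1/2 * fourier_char (-1) x"
    and "of_real (Im (fourier_char 1 x)) = -\<i>/2 * fourier_char 1 x + \<i>/2 * fourier_char (-1) x"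
    for x
    by (simp_all add: fourier_char_def complex_eq_iff)
  then show "trig_poly (\<lambda>x. of_real (Re (fourier_char 1 x)))"
    "trig_poly (\<lambda>x. of_real (Im (fourier_char 1 x)))"
    by (simp_all only:) (intro trig_poly.add trig_poly.monomial)+
qed

lemma trig_poly_real_polynomial_function:
  "real_polynomial_function p \<Longrightarrow> trig_poly (\<lambda>x. of_real (p (fourier_char 1 x)))"
proof (induction rule: real_polynomial_function.induct)
  case (linear f)
  interpret linear f
    using linear by (rule bounded_linear.linear)
  have "(\<lambda>x. of_real (f (fourier_char 1 x)) :: complex) = (\<lambda>x.
      of_real (f 1) * of_real (Re (fourier_char 1 x)) + of_real (f \<i>) * of_real (Im (fourier_char 1 x)))"
  proof
    fix x
    define z where "z = fourier_char 1 x"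
    have "f z = f (Re z *\<^sub>R 1 + Im z *\<^sub>R \<i>)"
      by (simp only: scaleR_conv_of_real mult_1_right mult.commute[of _ \<i>] complex_eq[symmetric])
    then show "of_real (f (fourier_char 1 x)) = (
        of_real (f 1) * of_real (Re (fourier_char 1 x)) + of_real (f \<i>) * of_real (Im (fourier_char 1 x)) :: complex)"
      by (simp add: z_def[symmetric] add scale ac_simps)
  qed
  then show ?case
    by (simp only:) (intro trig_poly.add trig_poly_mult trig_poly_const trig_poly_Re_Im_circle)
qed (simp_all add: trig_poly_const trig_poly.add trig_poly_mult)

lemma trig_poly_polynomial_function:
  assumes "polynomial_function p"
  shows "trig_poly (\<lambda>x. p (fourier_char 1 x))"
proof -
  have "real_polynomial_function (Re \<circ> p)" "real_polynomial_function (Im \<circ> p)"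
    using assms by (auto simp: polynomial_function_def intro: bounded_linear_Re bounded_linear_Im)
  then have "trig_poly (\<lambda>x. of_real ((Re \<circ> p) (fourier_char 1 x)))"
    "trig_poly (\<lambda>x. of_real ((Im \<circ> p) (fourier_char 1 x)))"
    by (simp_all only: trig_poly_real_polynomial_function)
  then have "trig_poly (\<lambda>x. of_real (Re (p (fourier_char 1 x))) + \<i> * of_real (Im (p (fourier_char 1 x))))"
    by (intro trig_poly.add trig_poly_mult trig_poly_const) simp_all
  then show ?thesis
    by (simp add: complex_eq[symmetric])
qed

definition near_integers :: "real \<Rightarrow> real set" where
  "near_integers d = {x. norm (fourier_char 1 x - 1) < d}"

lemma open_near_integers: "open (near_integers d)"
  unfolding near_integers_def by (intro open_Collect_less continuous_intros)

lemma fourier_char_1_eq_1_iff: "fourier_char 1 x = 1 \<longleftrightarrow> x \<in> \<int>"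
proof
  assume "fourier_char 1 x = 1"
  then obtain j :: int where "2 * pi * x = 2 * pi * j"
    by (auto simp: fourier_char_def cis_conv_exp exp_eq_1 algebra_simps)
  then show "x \<in> \<int>"
    by simp
qed (auto simp: fourier_char_def elim: Ints_cases)

text \<open>\<open>g\<close> transported to the unit circle through the angle, and damped to \<open>0\<close> at the point
  \<open>1\<close>, where the transported function may jump.\<close>

definition cutoff_on_circle :: "(real \<Rightarrow> complex) \<Rightarrow> real \<Rightarrow> complex \<Rightarrow> complex" where
  "cutoff_on_circle g d z = g (Arg2pi z / (2 * pi)) * of_real (min 1 (norm (z - 1) / d))"

lemma cutoff_on_circle_fourier_char:
  assumes "0 \<le> x" "x < 1"
  shows "cutoff_on_circle g d (fourier_char 1 x) = g x * of_real (min 1 (norm (fourier_char 1 x - 1) / d))"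
proof -
  have "Arg2pi (fourier_char 1 x) = 2 * pi * x"
    using assms by (intro Arg2pi_unique[of 1]) (auto simp: fourier_char_def cis_conv_exp)
  then show ?thesis
    by (simp add: cutoff_on_circle_def)
qed

lemma continuous_on_cutoff_on_circle:
  assumes g: "continuous_on {0..1} g" and bound: "\<And>x. x \<in> {0..1} \<Longrightarrow> norm (g x) \<le> B"
    and "d > 0"
  shows "continuous_on (sphere 0 1) (cutoff_on_circle g d)"
  unfolding continuous_on_eq_continuous_within
proof
  fix z :: complex assume z: "z \<in> sphere 0 1"
  have arg: "0 \<le> Arg2pi w / (2 * pi) \<and> Arg2pi w / (2 * pi) < 1" for w
    using Arg2pi[of w] by (simp add: field_simps)
  show "continuous (at z within sphere 0 1) (cutoff_on_circle g d)"
  proof (cases "z = 1")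
    case True
    have near_1: "norm (cutoff_on_circle g d w) \<le> B * (norm (w - 1) / d)" for w
      unfolding cutoff_on_circle_def norm_mult norm_of_real
      using arg[of w] bound[of "Arg2pi w / (2 * pi)"] \<open>d > 0\<close>
      by (intro mult_mono) (auto intro: order_trans[OF norm_ge_zero])
    have "((\<lambda>w. B * (norm (w - 1) / d)) \<longlongrightarrow> 0) (at 1 within sphere 0 1)"
      by (rule tendsto_mult_right_zero tendsto_divide_zero tendsto_norm_zero LIM_zero tendsto_ident_at)+
    then have "(cutoff_on_circle g d \<longlongrightarrow> 0) (at 1 within sphere 0 1)"
      by (rule Lim_null_comparison[OF always_eventually[OF allI[OF near_1]]])
    then show ?thesis
      using True by (simp add: continuous_within cutoff_on_circle_def)
  next
    case False
    then have "z \<notin> \<real>\<^sub>\<ge>\<^sub>0"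
      using z by (auto simp: nonneg_Reals_def)
    then have "Arg2pi z \<noteq> 0"
      by (auto simp: Arg2pi_eq_0 complex_nonneg_Reals_iff complex_is_Real_iff)
    then have "Arg2pi z / (2 * pi) \<in> interior {0..1}"
      using arg[of z] Arg2pi[of z] by auto
    then have "isCont g (Arg2pi z / (2 * pi))"
      by (rule continuous_on_interior[OF g])
    moreover have "isCont (\<lambda>w. Arg2pi w / (2 * pi)) z"
      using continuous_at_Arg2pi[OF \<open>z \<notin> \<real>\<^sub>\<ge>\<^sub>0\<close>] by (intro continuous_intros) simp_all
    ultimately have "isCont (\<lambda>w. g (Arg2pi w / (2 * pi))) z"
      by (rule isCont_o2[rotated])
    then have "isCont (cutoff_on_circle g d) z"
      unfolding cutoff_on_circle_def using \<open>d > 0\<close> by (intro continuous_intros) simp_all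
    then show ?thesis
      by (rule continuous_at_imp_continuous_within)
  qed
qed

text \<open>Since \<open>g\<close> need not be periodic, the approximation can only be uniform away from the
  integers.\<close>

lemma trig_poly_approx_off_integers:
  assumes g: "continuous_on {0..1} g" and bound: "\<And>x. x \<in> {0..1} \<Longrightarrow> norm (g x) \<le> B"
    and "e > 0" "d > 0"
  obtains P where "trig_poly P"
    "\<And>x. x \<in> {0..1} \<Longrightarrow> norm (g x - P x) \<le> e + B * indicator (near_integers d) x"
proof -
  obtain p where p: "polynomial_function p"
    and approx: "\<And>z. z \<in> sphere 0 1 \<Longrightarrow> norm (cutoff_on_circle g d z - p z) < e"
    using Stone_Weierstrass_polynomial_function[OF compact_sphere
        continuous_on_cutoff_on_circle[OF g bound \<open>d > 0\<close>] \<open>e > 0\<close>]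
    by blast
  define P where "P x = p (fourier_char 1 x)" for x
  have approx_P: "norm (cutoff_on_circle g d (fourier_char 1 x) - P x) < e" for x
    unfolding P_def by (intro approx) simp
  have "norm (g x - P x) \<le> e + B * indicator (near_integers d) x" if x: "x \<in> {0..1}" for x
  proof (cases "x = 1")
    case True
    have "cutoff_on_circle g d 1 = 0"
      by (simp add: cutoff_on_circle_def)
    then have "norm (P 1) < e"
      using approx_P[of 1] by (simp add: fourier_char_def)
    moreover have "1 \<in> near_integers d"
      using \<open>d > 0\<close> by (simp add: near_integers_def fourier_char_def)
    ultimately show ?thesis
      using True bound[of 1] norm_triangle_ineq4[of "g 1" "P 1"] by simp
  next
    case False
    define c where "c = min 1 (norm (fourier_char 1 x - 1) / d)"
    have "g x - P x = g x * of_real (1 - c) + (cutoff_on_circle g d (fourier_char 1 x) - P x)"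
      using x False by (simp add: cutoff_on_circle_fourier_char c_def algebra_simps)
    also have "norm \<dots> \<le> norm (g x) * \<bar>1 - c\<bar> + e"
      using approx_P[of x] norm_triangle_ineq[of "g x * of_real (1 - c)" "cutoff_on_circle g d (fourier_char 1 x) - P x"]
      unfolding norm_mult norm_of_real by linarith
    also have "norm (g x) * \<bar>1 - c\<bar> \<le> B * indicator (near_integers d) x"
    proof (cases "x \<in> near_integers d")
      case True
      have "\<bar>1 - c\<bar> \<le> 1"
        using \<open>d > 0\<close> by (simp add: c_def)
      then have "norm (g x) * \<bar>1 - c\<bar> \<le> B * 1"
        using bound[OF x] by (intro mult_mono) (auto intro: order_trans[OF norm_ge_zero])
      then show ?thesis
        using True by simp
    next
      case False
      then have "c = 1"
        using \<open>d > 0\<close> by (simp add: near_integers_def c_def)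
      then show ?thesis
        using False by simp
    qed
    finally show ?thesis
      by simp
  qed
  moreover have "trig_poly P"
    unfolding P_def using p by (rule trig_poly_polynomial_function)
  ultimately show ?thesis
    using that by blast
qed

section \<open>Decay of Fourier--Stieltjes transforms\<close>

lemma filterlim_cofinite_finite_vimage:
  fixes f :: "'a \<Rightarrow> 'b"
  assumes "\<And>y. finite (f -` {y})"
  shows "filterlim f cofinite cofinite"
  unfolding filterlim_def le_filter_def eventually_filtermap eventually_cofinite
proof (intro allI impI)
  fix P :: "'b \<Rightarrow> bool" assume "finite {y. \<not> P y}"
  moreover have "{x. \<not> P (f x)} = (\<Union>y\<in>{y. \<not> P y}. f -` {y})"
    by auto
  ultimately show "finite {x. \<not> P (f x)}"
    using assms by simp
qed

lemma filterlim_floor_divide_cofinite_at_infinity: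
  fixes c :: real
  assumes "c > 0"
  shows "filterlim (\<lambda>t. \<lfloor>t / c\<rfloor>) cofinite at_infinity"
  unfolding filterlim_def le_filter_def eventually_filtermap eventually_cofinite
proof (intro allI impI)
  fix P :: "int \<Rightarrow> bool" assume "finite {n. \<not> P n}"
  then obtain K where K: "\<And>n. \<not> P n \<Longrightarrow> \<bar>n\<bar> \<le> K"
  proof -
    obtain k where "abs ` {n. \<not> P n} \<subseteq> {..k}"
      using \<open>finite {n. \<not> P n}\<close> finite_int_iff_bounded_le by metis
    then show ?thesis
      using that by (auto simp: image_subset_iff)
  qed
  have "P \<lfloor>t / c\<rfloor>" if "c * (real_of_int K + 1) \<le> norm t" for t
  proof -
    have "real_of_int K + 1 \<le> \<bar>t / c\<bar>"
      using that assms by (simp add: abs_divide pos_le_divide_eq mult.commute)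
    moreover have "of_int \<lfloor>t / c\<rfloor> \<le> t / c" "t / c < of_int \<lfloor>t / c\<rfloor> + 1"
      by linarith+
    ultimately have "K < \<bar>\<lfloor>t / c\<rfloor>\<bar>"
      by linarith
    then show ?thesis
      using K by (meson not_le)
  qed
  then show "eventually (\<lambda>t. P \<lfloor>t / c\<rfloor>) at_infinity"
    unfolding eventually_at_infinity by blast
qed

lemma norm_cis_diff_le: "norm (cis a - cis b) \<le> \<bar>a - b\<bar>"
proof -
  have "cis a - cis b = cis b * (iexp (a - b) - 1)"
    by (simp add: cis_conv_exp algebra_simps exp_add[symmetric])
  then show ?thesis
    using iexp_approx1[of "a - b" 0] by (simp add: norm_mult)
qed

locale rajchman_unit_interval = finite_measure N for N :: "real measure" +
  assumes sets_eq_borel [measurable_cong]: "sets N = sets borel"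
    and fourier_coefficients_tendsto_0:
      "((\<lambda>m. LINT x:{0..1}|N. fourier_char m x) \<longlongrightarrow> 0) cofinite"
begin

lemma set_integrable_continuous_on:
  fixes f :: "real \<Rightarrow> 'a::{banach, second_countable_topology}"
  assumes "continuous_on {0..1} f"
  shows "set_integrable N {0..1} f"
proof -
  obtain B where "B \<ge> 0" and B: "\<And>x. x \<in> {0..1} \<Longrightarrow> norm (f x) \<le> B"
    using continuous_on_compact_bound[OF compact_Icc assms] by blast
  have "AE x in N. norm (indicator {0..1} x *\<^sub>R f x) \<le> B"
    using B \<open>B \<ge> 0\<close> by (intro AE_I2) (simp split: split_indicator)
  moreover have "(\<lambda>x. indicator {0..1} x *\<^sub>R f x) \<in> borel_measurable N"
    using borel_measurable_continuous_on_indicator[OF _ assms]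
    by (simp add: measurable_cong_sets[OF sets_eq_borel refl])
  ultimately show ?thesis
    unfolding set_integrable_def by (rule integrable_const_bound)
qed

lemma space_eq_UNIV: "space N = UNIV"
  using sets_eq_imp_space_eq[OF sets_eq_borel] by simp

lemma set_integral_indicator: "A \<in> sets borel \<Longrightarrow> (LINT x:{0..1}|N. indicator A x) = measure N ({0..1} \<inter> A)"
  by (simp add: set_lebesgue_integral_def indicator_inter_arith[symmetric] space_eq_UNIV)

lemma norm_set_integral_le_measure:
  fixes f :: "real \<Rightarrow> 'a::{banach, second_countable_topology}"
  assumes f: "set_integrable N {0..1} f" and A: "A \<in> sets borel"
    and bound: "\<And>x. x \<in> {0..1} \<Longrightarrow> norm (f x) \<le> e + B * indicator A x"
  shows "norm (LINT x:{0..1}|N. f x) \<le> e * measure N {0..1} + B * measure N ({0..1} \<inter> A)"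
proof -
  have const: "set_integrable N {0..1} (\<lambda>x. e)"
    unfolding set_integrable_def
    by (rule integrable_const_bound[where B = "\<bar>e\<bar>"]) (simp_all split: split_indicator)
  have ind: "set_integrable N {0..1} (\<lambda>x. B * indicator A x)"
    unfolding set_integrable_def
    by (rule integrable_const_bound[where B = "\<bar>B\<bar>"]) (use A in \<open>simp_all split: split_indicator\<close>)
  have "norm (LINT x:{0..1}|N. f x) \<le> (LINT x:{0..1}|N. norm (f x))"
    using f by (rule set_integral_norm_bound)
  also have "\<dots> \<le> (LINT x:{0..1}|N. e + B * indicator A x)"
    using f const ind bound by (intro set_integral_mono set_integrable_norm set_integral_add) auto
  also have "\<dots> = e * measure N {0..1} + B * measure N ({0..1} \<inter> A)"
    using const ind A by (simp add: set_integral_const set_integral_indicator sets_eq_borel)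
  finally show ?thesis .
qed

lemma tendsto_set_integral_trig_poly_fourier_char:
  assumes "trig_poly P"
  shows "((\<lambda>n. LINT x:{0..1}|N. P x * fourier_char n x) \<longlongrightarrow> 0) cofinite"
  using assms
proof (induction rule: trig_poly.induct)
  case (monomial c m)
  have "(\<lambda>n. m + n) -` {k} = {k - m}" for k
    by auto
  then have "filterlim (\<lambda>n. m + n) cofinite cofinite"
    by (intro filterlim_cofinite_finite_vimage) simp
  then have "((\<lambda>n. LINT x:{0..1}|N. fourier_char (m + n) x) \<longlongrightarrow> 0) cofinite"
    by (rule filterlim_compose[OF fourier_coefficients_tendsto_0])
  then show ?case
    by (simp add: mult.assoc fourier_char_mult tendsto_mult_right_zero)
next
  case (add f g)
  have "set_integrable N {0..1} (\<lambda>x. f x * fourier_char n x)"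
    and "set_integrable N {0..1} (\<lambda>x. g x * fourier_char n x)" for n
    using continuous_on_trig_poly[OF add.hyps(1)] continuous_on_trig_poly[OF add.hyps(2)]
    by (auto intro!: set_integrable_continuous_on continuous_intros)
  then show ?case
    using tendsto_add_zero[OF add.IH] by (simp add: distrib_right)
qed

lemma measure_near_integers_small:
  assumes "emeasure N {0, 1} = 0" "\<eta> > 0"
  obtains d where "d > 0" "measure N ({0..1} \<inter> near_integers d) < \<eta>"
proof -
  define S where "S m = {0..1} \<inter> near_integers (1 / Suc m)" for m :: nat
  have "range S \<subseteq> sets N"
    using open_near_integers by (auto simp: S_def sets_eq_borel)
  moreover have "decseq S"
    unfolding S_def near_integers_def
    by (intro decseq_SucI) (auto elim!: order.strict_trans2 simp: frac_le)
  ultimately have lim: "(\<lambda>m. measure N (S m)) \<longlonglongrightarrow> measure N (\<Inter>m. S m)"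
    by (rule finite_Lim_measure_decseq)
  have "(\<Inter>m. S m) \<subseteq> {0, 1}"
  proof
    fix x assume x: "x \<in> (\<Inter>m. S m)"
    have small: "norm (fourier_char 1 x - 1) < inverse (Suc m)" for m
      using x by (auto simp: S_def near_integers_def inverse_eq_divide)
    have "\<not> 0 < norm (fourier_char 1 x - 1)"
      using reals_Archimedean small order.asym by blast
    then have "fourier_char 1 x = 1"
      by simp
    then have "x \<in> \<int>" and "x \<in> {0..1}"
      using x by (auto simp: fourier_char_1_eq_1_iff S_def)
    then show "x \<in> {0, 1}"
      by (auto elim!: Ints_cases)
  qed
  then have "emeasure N (\<Inter>m. S m) \<le> emeasure N {0, 1}"
    by (rule emeasure_mono) (simp add: sets_eq_borel)
  then have "measure N (\<Inter>m. S m) = 0"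
    using assms(1) by (simp add: measure_def)
  then have "eventually (\<lambda>m. measure N (S m) < \<eta>) sequentially"
    using order_tendstoD(2)[OF lim] assms(2) by simp
  then obtain m where "measure N (S m) < \<eta>"
    by (auto simp: eventually_sequentially)
  then show ?thesis
    using that[of "1 / Suc m"] by (simp add: S_def)
qed

lemma tendsto_set_integral_fourier_char:
  assumes atoms: "emeasure N {0, 1} = 0" and g: "continuous_on {0..1} g"
  shows "((\<lambda>n. LINT x:{0..1}|N. g x * fourier_char n x) \<longlongrightarrow> 0) cofinite"
proof (rule tendstoI)
  fix e :: real assume "e > 0"
  obtain B where "B > 0" and B: "\<And>x. x \<in> {0..1} \<Longrightarrow> norm (g x) \<le> B"
    using compact_imp_bounded[OF compact_continuous_image[OF g compact_Icc]]
    by (auto simp: bounded_pos)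
  define M where "M = measure N {0..1}"
  define e' where "e' = e / (3 * (M + 1))"
  have "M \<ge> 0"
    by (simp add: M_def)
  then have "e' > 0"
    using \<open>e > 0\<close> by (simp add: e'_def)
  have "e' * M < e / 3"
    using \<open>M \<ge> 0\<close> \<open>e > 0\<close> by (simp add: e'_def field_simps)
  obtain d where "d > 0" and d: "measure N ({0..1} \<inter> near_integers d) < e / (3 * B)"
    using measure_near_integers_small[OF atoms, of "e / (3 * B)"] \<open>e > 0\<close> \<open>B > 0\<close> by auto
  obtain P where P: "trig_poly P"
    and approx: "\<And>x. x \<in> {0..1} \<Longrightarrow> norm (g x - P x) \<le> e' + B * indicator (near_integers d) x"
    using trig_poly_approx_off_integers[OF g B \<open>e' > 0\<close> \<open>d > 0\<close>] by blast
  have P_cont: "continuous_on {0..1} P"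
    using P by (rule continuous_on_trig_poly)
  have "norm (LINT x:{0..1}|N. (g x - P x) * fourier_char n x) \<le>
      e' * M + B * measure N ({0..1} \<inter> near_integers d)" for n
    unfolding M_def
    using approx g P_cont open_near_integers
    by (intro norm_set_integral_le_measure set_integrable_continuous_on continuous_intros)
       (auto simp: norm_mult)
  also have "e' * M + B * measure N ({0..1} \<inter> near_integers d) < 2 * e / 3"
    using \<open>e' * M < e / 3\<close> d \<open>B > 0\<close> by (simp add: field_simps)
  finally have error: "norm (LINT x:{0..1}|N. (g x - P x) * fourier_char n x) < 2 * e / 3" for n .
  have "eventually (\<lambda>n. norm (LINT x:{0..1}|N. P x * fourier_char n x) < e / 3) cofinite"
    using tendstoD[OF tendsto_set_integral_trig_poly_fourier_char[OF P], of "e / 3"] \<open>e > 0\<close>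
    by simp
  then show "eventually (\<lambda>n. dist (LINT x:{0..1}|N. g x * fourier_char n x) 0 < e) cofinite"
  proof eventually_elim
    case (elim n)
    have "(LINT x:{0..1}|N. g x * fourier_char n x) =
        (LINT x:{0..1}|N. (g x - P x) * fourier_char n x) + (LINT x:{0..1}|N. P x * fourier_char n x)"
      using g P_cont
      by (subst set_integral_add(2)[symmetric])
         (auto intro!: set_integrable_continuous_on continuous_intros simp: algebra_simps)
    then show ?case
      using error[of n] elim norm_triangle_ineq[of "LINT x:{0..1}|N. (g x - P x) * fourier_char n x"
          "LINT x:{0..1}|N. P x * fourier_char n x"]
      by simp
  qed
qed

lemma norm_set_integral_cis_diff_le:
  assumes g: "continuous_on {0..1} g" and B: "\<And>x. x \<in> {0..1} \<Longrightarrow> norm (g x) \<le> B"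
  shows "norm ((LINT x:{0..1}|N. g x * cis (s * x) * fourier_char n x) -
      (LINT x:{0..1}|N. g x * cis (t * x) * fourier_char n x)) \<le> B * \<bar>s - t\<bar> * measure N {0..1}"
proof -
  have "norm (g x * (cis (s * x) - cis (t * x)) * fourier_char n x) \<le> B * \<bar>s - t\<bar>"
    if x: "x \<in> {0..1}" for x
  proof -
    have "norm (cis (s * x) - cis (t * x)) \<le> \<bar>s - t\<bar> * x"
      using norm_cis_diff_le[of "s * x" "t * x"] x by (simp add: abs_mult left_diff_distrib[symmetric])
    also have "\<dots> \<le> \<bar>s - t\<bar>"
      using x by (simp add: mult_left_le)
    finally show ?thesis
      using B[OF x] by (simp add: norm_mult mult_mono')
  qed
  then have "norm (LINT x:{0..1}|N. g x * (cis (s * x) - cis (t * x)) * fourier_char n x) \<le>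
      B * \<bar>s - t\<bar> * measure N {0..1}"
    using g by (intro norm_set_integral_le_measure[where A = "{}" and B = 0, simplified]
        set_integrable_continuous_on continuous_intros) simp_all
  moreover have "(LINT x:{0..1}|N. g x * (cis (s * x) - cis (t * x)) * fourier_char n x) =
      (LINT x:{0..1}|N. g x * cis (s * x) * fourier_char n x) - (LINT x:{0..1}|N. g x * cis (t * x) * fourier_char n x)"
    using g by (subst set_integral_diff(2)[symmetric])
      (auto intro!: set_integrable_continuous_on continuous_intros simp: algebra_simps)
  ultimately show ?thesis
    by simp
qed

text \<open>The integrals depend Lipschitz-continuously on the frequency \<open>u\<close>, so the convergence
  at finitely many grid frequencies propagates to all of \<open>[0, 1]\<close>.\<close>

lemma uniform_limit_set_integral_cis_fourier_char:
  assumes atoms: "emeasure N {0, 1} = 0" and g: "continuous_on {0..1} g"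
  shows "uniform_limit {0..1} (\<lambda>n u. LINT x:{0..1}|N. g x * cis (2 * pi * u * x) * fourier_char n x)
           (\<lambda>_. 0) cofinite"
proof (rule uniform_limitI)
  fix e :: real assume "e > 0"
  define F where "F n u = (LINT x:{0..1}|N. g x * cis (2 * pi * u * x) * fourier_char n x)" for n u
  obtain B where "B > 0" and B: "\<And>x. x \<in> {0..1} \<Longrightarrow> norm (g x) \<le> B"
    using compact_imp_bounded[OF compact_continuous_image[OF g compact_Icc]]
    by (auto simp: bounded_pos)
  define M where "M = measure N {0..1}"
  obtain J :: nat where J: "4 * pi * B * (M + 1) / e < J"
    using reals_Archimedean2 by blast
  have "M \<ge> 0"
    by (simp add: M_def)
  then have "0 < 4 * pi * B * (M + 1) / e"
    using \<open>e > 0\<close> \<open>B > 0\<close> by simp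
  then have "0 < J"
    using J by linarith
  have "4 * pi * B * M \<le> 4 * pi * B * (M + 1)"
    using \<open>B > 0\<close> by simp
  also have "\<dots> < e * J"
    using J \<open>e > 0\<close> by (simp add: field_simps)
  finally have step: "2 * pi * B * M / J < e / 2"
    using \<open>0 < J\<close> by (simp add: field_simps)
  have "\<forall>j\<in>{..J}. eventually (\<lambda>n. norm (F n (j / J)) < e / 2) cofinite"
  proof
    fix j assume "j \<in> {..J}"
    have "continuous_on {0..1} (\<lambda>x. g x * cis (2 * pi * (j / J) * x))"
      using g by (intro continuous_intros)
    from tendstoD[OF tendsto_set_integral_fourier_char[OF atoms this], of "e / 2"] \<open>e > 0\<close>
    show "eventually (\<lambda>n. norm (F n (j / J)) < e / 2) cofinite"
      by (simp add: F_def mult.assoc)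
  qed
  then have "eventually (\<lambda>n. \<forall>j\<in>{..J}. norm (F n (j / J)) < e / 2) cofinite"
    by (rule eventually_ball_finite[rotated]) simp
  then show "eventually (\<lambda>n. \<forall>u\<in>{0..1}. dist (F n u) 0 < e) cofinite"
  proof eventually_elim
    case (elim n)
    show ?case
    proof
      fix u :: real assume u: "u \<in> {0..1}"
      define j where "j = nat \<lfloor>u * J\<rfloor>"
      have "0 \<le> u * J" "u * J \<le> J"
        using u by (simp_all add: mult_left_le_one_le)
      then have "real j = \<lfloor>u * J\<rfloor>"
        by (simp add: j_def)
      then have "real j \<le> u * J" "u * J < real j + 1" "j \<le> J"
        using \<open>u * J \<le> J\<close> by linarith+
      then have "\<bar>u * J - j\<bar> / J \<le> 1 / J"
        by (intro divide_right_mono) auto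
      moreover have "u - j / J = (u * J - j) / J"
        using \<open>0 < J\<close> by (simp add: field_simps)
      ultimately have "\<bar>u - j / J\<bar> \<le> 1 / J"
        by (simp add: abs_divide)
      then have "\<bar>2 * pi * u - 2 * pi * (j / J)\<bar> \<le> 2 * pi / J"
        using mult_left_mono[of _ _ "2 * pi"]
        by (simp only: right_diff_distrib[symmetric] abs_mult) (simp add: divide_inverse)
      have "norm (F n u - F n (j / J)) \<le> B * \<bar>2 * pi * u - 2 * pi * (j / J)\<bar> * M"
        unfolding F_def M_def by (rule norm_set_integral_cis_diff_le[OF g B])
      also have "\<dots> \<le> B * (2 * pi / J) * M"
        using \<open>\<bar>2 * pi * u - 2 * pi * (j / J)\<bar> \<le> 2 * pi / J\<close> \<open>B > 0\<close> \<open>M \<ge> 0\<close>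
        by (intro mult_right_mono mult_left_mono) auto
      also have "\<dots> < e / 2"
        using step by (simp add: field_simps)
      moreover have "norm (F n (j / J)) < e / 2"
        using elim \<open>j \<le> J\<close> by simp
      ultimately show "dist (F n u) 0 < e"
        using norm_triangle_ineq[of "F n u - F n (j / J)" "F n (j / J)"] by simp
    qed
  qed
qed

theorem tendsto_set_integral_cis_at_infinity:
  assumes atoms: "emeasure N {0, 1} = 0" and g: "continuous_on {0..1} g"
  shows "((\<lambda>t. LINT x:{0..1}|N. g x * cis (t * x)) \<longlongrightarrow> 0) at_infinity"
proof (rule tendstoI)
  fix e :: real assume "e > 0"
  have "eventually (\<lambda>n. \<forall>u\<in>{0..1}.
      dist (LINT x:{0..1}|N. g x * cis (2 * pi * u * x) * fourier_char n x) 0 < e) cofinite"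
    using uniform_limitD[OF uniform_limit_set_integral_cis_fourier_char[OF atoms g] \<open>e > 0\<close>] .
  then have "eventually (\<lambda>t. \<forall>u\<in>{0..1}. dist (LINT x:{0..1}|N.
      g x * cis (2 * pi * u * x) * fourier_char \<lfloor>t / (2 * pi)\<rfloor> x) 0 < e) at_infinity"
    by (rule eventually_compose_filterlim) (simp add: filterlim_floor_divide_cofinite_at_infinity)
  then show "eventually (\<lambda>t. dist (LINT x:{0..1}|N. g x * cis (t * x)) 0 < e) at_infinity"
  proof eventually_elim
    case (elim t)
    define u where "u = frac (t / (2 * pi))"
    have "u \<in> {0..1}"
      using frac_lt_1[of "t / (2 * pi)"] by (simp add: u_def)
    moreover have "cis (t * x) = cis (2 * pi * u * x) * fourier_char \<lfloor>t / (2 * pi)\<rfloor> x" for x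
      by (simp add: u_def frac_def fourier_char_def cis_mult algebra_simps)
    ultimately show ?case
      using elim by (simp add: mult.assoc)
  qed
qed

end

section \<open>The measure of the question mark function\<close>

lemma sets_minkowski_measure [simp, measurable_cong]: "sets minkowski_measure = sets borel"
  by (simp add: minkowski_measure_def)

lemma space_minkowski_measure [simp]: "space minkowski_measure = UNIV"
  by (simp add: minkowski_measure_def)

lemma minkowski_q_nonpos: "x \<le> 0 \<Longrightarrow> minkowski_q x = 0"
  and minkowski_q_ge_1: "1 \<le> x \<Longrightarrow> minkowski_q x = 1"
  by (simp_all add: minkowski_q_def)

text \<open>The construction \<open>interval_measure\<close> yields the Lebesgue--Stieltjes measure of
  \<open>minkowski_q\<close> only if the interval function extends to a measure (which requires monotonicity);
  otherwise it defaults to the zero measure. Both alternatives are carried along.\<close>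

lemma minkowski_measure_cases:
  "minkowski_measure = null_measure borel \<or>
   (\<forall>a b. a \<le> b \<longrightarrow> emeasure minkowski_measure {a<..b} = ennreal (minkowski_q b - minkowski_q a))"
proof (cases "\<exists>\<mu>. (\<forall>i\<in>{(a, b). a \<le> b}. \<mu> ((\<lambda>(a, b). {a<..b::real}) i) =
      (\<lambda>(a, b). ennreal (minkowski_q b - minkowski_q a)) i) \<and>
    measure_space UNIV (sigma_sets UNIV ((\<lambda>(a, b). {a<..b::real}) ` {(a, b). a \<le> b})) \<mu>")
  case True
  then obtain \<mu> where eq: "\<forall>i\<in>{(a, b). a \<le> b}. \<mu> ((\<lambda>(a, b). {a<..b::real}) i) =
      (\<lambda>(a, b). ennreal (minkowski_q b - minkowski_q a)) i"
    and ms: "measure_space UNIV (sigma_sets UNIV ((\<lambda>(a, b). {a<..b::real}) ` {(a, b). a \<le> b})) \<mu>"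
    by blast
  have M: "minkowski_measure = extend_measure UNIV {(a, b). a \<le> b} (\<lambda>(a, b). {a<..b})
      (\<lambda>(a, b). ennreal (minkowski_q b - minkowski_q a))"
    by (simp add: minkowski_measure_def interval_measure_def)
  have "sets minkowski_measure = sigma_sets UNIV ((\<lambda>(a, b). {a<..b::real}) ` {(a, b). a \<le> b})"
    by (subst M, rule sets_extend_measure) auto
  then have "positive (sets minkowski_measure) \<mu>" "countably_additive (sets minkowski_measure) \<mu>"
    using ms unfolding measure_space_def by auto
  then show ?thesis
    using eq by (auto intro!: emeasure_extend_measure_Pair[OF M])
next
  case False
  then have "minkowski_measure =
      measure_of UNIV ((\<lambda>(a, b). {a<..b::real}) ` {(a, b). a \<le> b}) (\<lambda>_. 0)"
    unfolding minkowski_measure_def interval_measure_def extend_measure_def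
    by (subst if_not_P) auto
  then have "emeasure minkowski_measure A = 0" for A
    by (metis emeasure_sigma)
  then show ?thesis
    by (auto intro!: measure_eqI)
qed

context
  assumes emeasure_Ioc: "\<And>a b. a \<le> b \<Longrightarrow>
    emeasure minkowski_measure {a<..b} = ennreal (minkowski_q b - minkowski_q a)"
begin

lemma AE_minkowski_measure_unit_interval: "AE x in minkowski_measure. x \<in> {0<..1}"
proof (rule AE_I')
  define S where "S m = {- real m<..0} \<union> {1<..1 + real m}" for m :: nat
  show "(\<Union>m. S m) \<in> null_sets minkowski_measure"
    unfolding S_def
    by (intro null_sets_UN null_sets.Un)
       (auto simp: null_sets_def emeasure_Ioc minkowski_q_nonpos minkowski_q_ge_1)
  show "{x \<in> space minkowski_measure. x \<notin> {0<..1}} \<subseteq> (\<Union>m. S m)"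
  proof
    fix x assume "x \<in> {x \<in> space minkowski_measure. x \<notin> {0<..1}}"
    moreover obtain m :: nat where "\<bar>x\<bar> < m"
      using reals_Archimedean2 by blast
    ultimately have "x \<in> S m"
      by (auto simp: S_def)
    then show "x \<in> (\<Union>m. S m)"
      by blast
  qed
qed

lemma prob_space_minkowski_measure: "prob_space minkowski_measure"
proof
  have "emeasure minkowski_measure (space minkowski_measure) = emeasure minkowski_measure {0<..1}"
    by (rule emeasure_eq_AE) (use AE_minkowski_measure_unit_interval in auto)
  then show "emeasure minkowski_measure (space minkowski_measure) = 1"
    by (simp add: emeasure_Ioc minkowski_q_nonpos minkowski_q_ge_1)
qed

interpretation prob_space minkowski_measure
  by (rule prob_space_minkowski_measure)

lemma emeasure_minkowski_Ioc_shrinking: "(\<lambda>m. emeasure minkowski_measure {a<..a + 1 / Suc m}) \<longlonglongrightarrow> 0"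
proof -
  have "1 / real (Suc (Suc m)) \<le> 1 / real (Suc m)" for m
    by (simp add: frac_le)
  then have "decseq (\<lambda>m. {a<..a + 1 / real (Suc m)})"
    by (intro decseq_SucI) (simp add: Ioc_subset_iff)
  moreover have "(\<Inter>m. {a<..a + 1 / real (Suc m)}) = {}"
  proof -
    have "\<exists>m. \<not> y \<le> a + 1 / Suc m" if "a < y" for y
    proof -
      obtain m where "inverse (real (Suc m)) < y - a"
        using reals_Archimedean[of "y - a"] \<open>a < y\<close> by auto
      then show ?thesis
        by (intro exI[of _ m]) (simp add: inverse_eq_divide)
    qed
    then show ?thesis
      by force
  qed
  ultimately show ?thesis
    using Lim_emeasure_decseq[of "\<lambda>m. {a<..a + 1 / real (Suc m)}" minkowski_measure]
    by (simp add: emeasure_Ioc image_subset_iff)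
qed

text \<open>No continuity of \<open>minkowski_q\<close> is needed: the reflection symmetry moves the left-sided
  interval ending at \<open>x\<close> to a right-sided one starting at \<open>1 - x\<close>, whose measure shrinks to zero.\<close>

lemma emeasure_minkowski_singleton_nondegenerate: "emeasure minkowski_measure {x} = 0"
proof -
  have "emeasure minkowski_measure {x} \<le> emeasure minkowski_measure {1 - x<..1 - x + 1 / Suc m}" for m
  proof -
    define h where "h = 1 / real (Suc m)"
    have "h > 0"
      by (simp add: h_def)
    have "emeasure minkowski_measure {x} \<le> emeasure minkowski_measure {x - h<..x}"
      using \<open>h > 0\<close> by (intro emeasure_mono) auto
    also have "\<dots> = ennreal (minkowski_q (1 - x + h) - minkowski_q (1 - x))"
    proof -
      have "minkowski_q (1 - x + h) = 1 - minkowski_q (x - h)"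
        using minkowski_q_one_minus[of "x - h"] by (simp only: diff_diff_eq2 diff_add_eq)
      then have "minkowski_q x - minkowski_q (x - h) = minkowski_q (1 - x + h) - minkowski_q (1 - x)"
        using minkowski_q_one_minus[of x] by linarith
      then show ?thesis
        using \<open>h > 0\<close> by (simp add: emeasure_Ioc)
    qed
    also have "\<dots> = emeasure minkowski_measure {1 - x<..1 - x + h}"
      using \<open>h > 0\<close> by (simp add: emeasure_Ioc)
    finally show ?thesis
      by (simp add: h_def)
  qed
  then have "emeasure minkowski_measure {x} \<le> 0"
    by (intro LIMSEQ_le_const[OF emeasure_minkowski_Ioc_shrinking]) auto
  then show ?thesis
    by simp
qed

lemma minkowski_q_nonneg: "0 \<le> x \<Longrightarrow> 0 \<le> minkowski_q x"
proof (rule ccontr)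
  assume "0 \<le> x" "\<not> 0 \<le> minkowski_q x"
  then have "x \<le> 1"
    using minkowski_q_ge_1 by force
  have "emeasure minkowski_measure {0<..x} + emeasure minkowski_measure {x<..1} =
      emeasure minkowski_measure {0<..1}"
    using \<open>0 \<le> x\<close> \<open>x \<le> 1\<close> by (subst plus_emeasure) (auto simp: ivl_disj_un)
  then have "ennreal (1 - minkowski_q x) = 1"
    using \<open>0 \<le> x\<close> \<open>x \<le> 1\<close> \<open>\<not> 0 \<le> minkowski_q x\<close>
    by (simp add: emeasure_Ioc minkowski_q_nonpos minkowski_q_ge_1 ennreal_neg)
  then show False
    using \<open>\<not> 0 \<le> minkowski_q x\<close> by (simp add: ennreal_eq_1)
qed

lemma measure_minkowski_atMost: "measure minkowski_measure {..x} = minkowski_q x"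
proof -
  have "measure minkowski_measure {..x} = measure minkowski_measure {0<..max 0 (min x 1)}"
    by (rule measure_eq_AE) (use AE_minkowski_measure_unit_interval in auto)
  also have "\<dots> = minkowski_q x"
    by (auto simp: measure_def emeasure_Ioc minkowski_q_nonpos minkowski_q_ge_1 minkowski_q_nonneg
        max_def min_def)
  finally show ?thesis .
qed

lemma distr_minkowski_measure_reflect_nondegenerate:
  "distr minkowski_measure borel (\<lambda>x. 1 - x) = minkowski_measure"
proof (rule cdf_unique)
  show "real_distribution minkowski_measure"
    by (simp add: real_distribution_def real_distribution_axioms_def prob_space_minkowski_measure)
  then show "real_distribution (distr minkowski_measure borel (\<lambda>x. 1 - x))"
    by (simp add: real_distribution_def real_distribution_axioms_def prob_space_distr)
  show "cdf (distr minkowski_measure borel (\<lambda>x. 1 - x)) = cdf minkowski_measure"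
  proof
    fix x :: real
    have "(\<lambda>x. 1 - x) -` {..x} \<inter> space minkowski_measure = space minkowski_measure - {..<1 - x}"
      by auto
    then have "cdf (distr minkowski_measure borel (\<lambda>x. 1 - x)) x = 1 - measure minkowski_measure {..<1 - x}"
      using prob_compl[of "{..<1 - x}"] by (simp add: cdf_def measure_distr)
    also have "measure minkowski_measure {..<1 - x} = measure minkowski_measure {..1 - x}"
      by (rule measure_eq_AE)
         (auto intro!: AE_I'[of "{1 - x}"] simp: null_sets_def emeasure_minkowski_singleton_nondegenerate)
    finally show "cdf (distr minkowski_measure borel (\<lambda>x. 1 - x)) x = cdf minkowski_measure x"
      using minkowski_q_one_minus[of x] by (simp add: cdf_def measure_minkowski_atMost)
  qed
qed

end

lemma finite_measure_minkowski_measure: "finite_measure minkowski_measure"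
  using minkowski_measure_cases
proof
  assume "minkowski_measure = null_measure borel"
  then show ?thesis
    by (rule ssubst) (simp add: finite_measureI)
qed (use prob_space_minkowski_measure prob_space.finite_measure in blast)

lemma emeasure_minkowski_singleton: "emeasure minkowski_measure {x} = 0"
  using minkowski_measure_cases
proof
  assume "minkowski_measure = null_measure borel"
  then show ?thesis
    by (rule ssubst) simp
qed (use emeasure_minkowski_singleton_nondegenerate in blast)

lemma distr_minkowski_measure_reflect: "distr minkowski_measure borel (\<lambda>x. 1 - x) = minkowski_measure"
proof (cases "minkowski_measure = null_measure borel")
  case True
  show ?thesis
    by (subst (1 2) True, rule measure_eqI) (simp_all add: emeasure_distr)
qed (use minkowski_measure_cases distr_minkowski_measure_reflect_nondegenerate in auto)

lemma set_integral_minkowski_antisymmetric: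
  fixes f :: "real \<Rightarrow> real"
  assumes [measurable]: "f \<in> borel_measurable borel" and antisym: "\<And>x. f (1 - x) = - f x"
  shows "(LINT x:{0..1}|minkowski_measure. f x) = 0"
proof -
  let ?g = "\<lambda>x. indicator {0..1} x * f x"
  have "integral\<^sup>L minkowski_measure ?g = integral\<^sup>L (distr minkowski_measure borel (\<lambda>x. 1 - x)) ?g"
    by (simp add: distr_minkowski_measure_reflect)
  also have "\<dots> = integral\<^sup>L minkowski_measure (\<lambda>x. ?g (1 - x))"
    by (rule integral_distr) simp_all
  also have "\<dots> = - integral\<^sup>L minkowski_measure ?g"
    using antisym by (simp add: indicator_def conj_commute)
  finally show ?thesis
    by (simp add: set_lebesgue_integral_def)
qed

lemma set_integral_fourier_char_minkowski:
  "(LINT x:{0..1}|minkowski_measure. fourier_char m x) =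
    of_real (LINT x:{0..1}|minkowski_measure. cos (2 * pi * real (nat \<bar>m\<bar>) * x))"
proof -
  interpret finite_measure minkowski_measure
    by (rule finite_measure_minkowski_measure)
  have cos: "cos (2 * pi * of_int m * x) = cos (2 * pi * real (nat \<bar>m\<bar>) * x)" for x
    by (cases "m \<ge> 0") (simp_all add: cos_minus[of "2 * pi * real (nat (- m)) * x", symmetric])
  have "sin (2 * pi * of_int m * (1 - x)) = - sin (2 * pi * of_int m * x)" for x
    using sin_diff[of "2 * pi * of_int m" "2 * pi * of_int m * x"] by (simp add: right_diff_distrib)
  then have sin: "(LINT x:{0..1}|minkowski_measure. sin (2 * pi * of_int m * x)) = 0"
    by (intro set_integral_minkowski_antisymmetric) simp_all
  have integrable: "set_integrable minkowski_measure {0..1} (\<lambda>x. of_real (f (2 * pi * a * x)) :: complex)"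
    if "f = sin \<or> f = cos" for f a
    unfolding set_integrable_def using that
    by (intro integrable_const_bound[where B = 1]) (auto split: split_indicator)
  have "fourier_char m x = of_real (cos (2 * pi * real (nat \<bar>m\<bar>) * x)) + \<i> * of_real (sin (2 * pi * of_int m * x))"
    for x
    using cos[of x] by (simp add: fourier_char_def complex_eq_iff)
  then show ?thesis
    using integrable[of cos] integrable[of sin]
    by (simp add: set_integral_add set_integrable_mult_right set_integral_complex_of_real sin)
qed

theorem theorem3:
  fixes k :: nat
  assumes "(\<lambda>n::nat. LINT x:{0..1}|minkowski_measure. cos (2 * pi * real n * x))
             \<longlonglongrightarrow> 0"
  shows "((\<lambda>t::real. LINT x:{0..1}|minkowski_measure.
             (\<i> * complex_of_real x) ^ k * exp (\<i> * complex_of_real (t * x)))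
          \<longlongrightarrow> 0) at_infinity"
proof -
  interpret finite_measure minkowski_measure
    by (rule finite_measure_minkowski_measure)
  have fibres: "(\<lambda>m::int. nat \<bar>m\<bar>) -` {n} \<subseteq> {int n, - int n}" for n
    by auto
  have nat_abs: "filterlim (\<lambda>m::int. nat \<bar>m\<bar>) sequentially cofinite"
    unfolding cofinite_eq_sequentially[symmetric]
    by (intro filterlim_cofinite_finite_vimage finite_subset[OF fibres]) simp
  have "((\<lambda>m. LINT x:{0..1}|minkowski_measure. fourier_char m x) \<longlongrightarrow> 0) cofinite"
    using tendsto_of_real[OF filterlim_compose[OF assms nat_abs]]
    by (simp add: set_integral_fourier_char_minkowski)
  then interpret rajchman_unit_interval minkowski_measure
    by unfold_locales simp
  have "emeasure minkowski_measure {0, 1} = 0"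
    by (subst emeasure_insert) (simp_all add: emeasure_minkowski_singleton)
  from tendsto_set_integral_cis_at_infinity[OF this, of "\<lambda>x. (\<i> * of_real x) ^ k"]
  show ?thesis
    by (simp add: cis_conv_exp continuous_intros)
qed

end
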